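(* Let $b\ge 2$ and $n\ge 0$ be integers. If $x\in T_b(n)$ and $x\not\equiv 0 \pmod{s_0}$, then $x-(b-1)\in T_b(n)$.
   Context: For integers $b\ge 2$, $n\ge 0$, $i\ge0$ put $s_i=(b+1)b^{n+i}-1$ and $T_b(n)=\langle\{s_i:i\in\mathbb{N}\}\rangle$, the submonoid of $(\mathbb{N},+)$ generated by the $s_i$ (equivalently, by $s_0,\dots,s_{n+1}$). *)

theory Defs
  imports Main
begin

definition s :: "nat \<Rightarrow> nat \<Rightarrow> nat \<Rightarrow> nat" where
  "s b n i = (b + 1) * b ^ (n + i) - 1"

inductive_set nat_monoid_gen :: "nat set \<Rightarrow> nat set" for A :: "nat set" where
  zero: "0 \<in> nat_monoid_gen A"
| add: "a \<in> A \<Longrightarrow> y \<in> nat_monoid_gen A \<Longrightarrow> a + y \<in> nat_monoid_gen A"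

definition T :: "nat \<Rightarrow> nat \<Rightarrow> nat set" where
  "T b n = nat_monoid_gen (range (s b n))"

end

theory Submission
  imports Defs
begin

text \<open>Since \<open>s\<^sub>i\<^sub>+\<^sub>1 = b s\<^sub>i + (b - 1)\<close>, removing \<open>b - 1\<close> from a generator \<open>s\<^sub>i\<^sub>+\<^sub>1\<close> leaves
  \<open>b s\<^sub>i \<in> T\<^sub>b(n)\<close>. Hence an element of \<open>T\<^sub>b(n)\<close> whose representation uses some \<open>s\<^sub>i\<close> with
  \<open>i \<ge> 1\<close> can be lowered by \<open>b - 1\<close>; otherwise it is a sum of copies of \<open>s\<^sub>0\<close>.\<close>

lemma nat_monoid_gen_mult_add:
  assumes "a \<in> A" and "y \<in> nat_monoid_gen A"
  shows "k * a + y \<in> nat_monoid_gen A"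
proof (induction k)
  case 0
  then show ?case using assms(2) by simp
next
  case (Suc k)
  have "a + (k * a + y) \<in> nat_monoid_gen A"
    using assms(1) Suc.IH by (rule nat_monoid_gen.add)
  then show ?case by (simp add: add.assoc)
qed

lemma s_Suc: "s b n (Suc i) = b * s b n i + (b - 1)"
proof (cases b)
  case (Suc c)
  obtain d where d: "(b + 1) * b ^ (n + i) = Suc d"
    using Suc by (cases "(b + 1) * b ^ (n + i)") auto
  have si: "s b n i = d"
    unfolding s_def d by simp
  have "s b n (Suc i) = b * Suc d - 1"
    by (simp add: s_def d[symmetric] algebra_simps)
  also have "\<dots> = b * d + (b - 1)"
    using Suc by simp
  finally show ?thesis
    unfolding si .
qed (simp add: s_def)

lemma nat_monoid_gen_s_dvd_or_lower:
  assumes "x \<in> nat_monoid_gen (range (s b n))"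
  shows "s b n 0 dvd x \<or> (b - 1 \<le> x \<and> x - (b - 1) \<in> nat_monoid_gen (range (s b n)))"
  using assms
proof (induction x rule: nat_monoid_gen.induct)
  case zero
  then show ?case by simp
next
  case (add a y)
  let ?G = "nat_monoid_gen (range (s b n))"
  obtain i where a: "a = s b n i"
    using add.hyps(1) by auto
  show ?case
  proof (cases i)
    case 0
    show ?thesis
    proof (cases "s b n 0 dvd y")
      case True
      then show ?thesis using a 0 by simp
    next
      case False
      with add.IH have y: "b - 1 \<le> y" "y - (b - 1) \<in> ?G" by auto
      have "a + (y - (b - 1)) \<in> ?G"
        using add.hyps(1) y(2) by (rule nat_monoid_gen.add)
      then show ?thesis using y(1) by simp
    qed
  next
    case (Suc j)
    have "b * s b n j + y \<in> ?G"
      using nat_monoid_gen_mult_add[OF rangeI add.hyps(2)] .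
    then show ?thesis using a Suc by (simp add: s_Suc)
  qed
qed

theorem mainTheorem7:
  fixes b n x :: nat
  assumes "b \<ge> 2" and "x \<in> T b n" and "\<not> (s b n 0 dvd x)"
  shows "x \<ge> b - 1 \<and> x - (b - 1) \<in> T b n"
  using nat_monoid_gen_s_dvd_or_lower[of x b n] assms(2,3) unfolding T_def by auto

end
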